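(* Let $\kappa$ be a regular uncountable cardinal, let $\tau$ be a cardinal with $1 < \tau < \kappa$ and $\kappa^\tau = \kappa$, and let $J$ be a $\kappa$-complete ideal on $\kappa$ with $NS_\kappa \subseteq J$. Suppose that $\clubsuit_\kappa^{-/\tau}[J]$ holds. Then $\clubsuit_\kappa[J]$ holds.
   Context: An ideal on $\kappa$ is a nonempty $J \subseteq P(\kappa)$ with $\kappa \notin J$, every bounded subset of $\kappa$ in $J$, $J$ closed under subsets and under unions of two members; $J^+ = P(\kappa)\setminus J$; $\kappa$-complete means closed under unions of fewer than $\kappa$ members. $NS_\kappa$ is the nonstationary ideal; $[\kappa]^\kappa$ is the set of size-$\kappa$ subsets of $\kappa$; $acc(\kappa)$ is the set of nonzero limit ordinals below $\kappa$. $\clubsuit_\kappa^{-/\tau}[J]$: there are $B^i_\delta \subseteq \delta$ with $\sup B^i_\delta = \delta$ for $\delta \in acc(\kappa)$, $i < \tau$, such that $\{\delta \in acc(\kappa) : \exists i < \tau\,(B^i_\delta \subseteq W)\} \in J^+$ for every $W \in [\kappa]^\kappa$. $\clubsuit_\kappa[J]$: there are $s_\alpha \subseteq \alpha$ with $\sup s_\alpha = \alpha$ for $\alpha \in acc(\kappa)$ such that $\{\alpha \in acc(\kappa) : s_\alpha \subseteq A\} \in J^+$ for all $A \in [\kappa]^\kappa$. *)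

theory Defs
  imports Main
begin

text \<open>The cardinal kappa is represented by a cardinal well-order r (an initial ordinal);
 ordinals below kappa are the elements of Field r.\<close>

definition sless :: "'a rel \<Rightarrow> 'a \<Rightarrow> 'a \<Rightarrow> bool" where
  "sless r a b \<longleftrightarrow> (a, b) \<in> r \<and> a \<noteq> b"

definition regular_card :: "'a rel \<Rightarrow> bool" where
  "regular_card r \<longleftrightarrow> Card_order r \<and>
     (\<forall>A \<subseteq> Field r. (\<forall>a \<in> Field r. \<exists>b \<in> A. (a, b) \<in> r) \<longrightarrow> (card_of A, r) \<in> ordIso)"

definition uncountable_card :: "'a rel \<Rightarrow> bool" where
  "uncountable_card r \<longleftrightarrow> (natLeq, r) \<in> ordLess"

definition acc :: "'a rel \<Rightarrow> 'a set" where
  "acc r = {d \<in> Field r. (\<exists>a. sless r a d) \<and> (\<forall>a. sless r a d \<longrightarrow> (\<exists>b. sless r a b \<and> sless r b d))}"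

definition cofinal_below :: "'a rel \<Rightarrow> 'a set \<Rightarrow> 'a \<Rightarrow> bool" where
  "cofinal_below r B d \<longleftrightarrow> B \<subseteq> underS r d \<and> (\<forall>a \<in> underS r d. \<exists>b \<in> B. (a, b) \<in> r)"

definition bounded_in :: "'a rel \<Rightarrow> 'a set \<Rightarrow> bool" where
  "bounded_in r A \<longleftrightarrow> A \<subseteq> Field r \<and> (\<exists>a \<in> Field r. A \<subseteq> underS r a)"

definition club :: "'a rel \<Rightarrow> 'a set \<Rightarrow> bool" where
  "club r C \<longleftrightarrow> C \<subseteq> Field r \<and>
     (\<forall>a \<in> Field r. \<exists>b \<in> C. sless r a b) \<and>
     (\<forall>d \<in> acc r. (\<forall>a. sless r a d \<longrightarrow> (\<exists>b \<in> C. (a, b) \<in> r \<and> sless r b d)) \<longrightarrow> d \<in> C)"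

definition NS :: "'a rel \<Rightarrow> 'a set set" where
  "NS r = {A. A \<subseteq> Field r \<and> (\<exists>C. club r C \<and> A \<inter> C = {})}"

definition is_ideal :: "'a rel \<Rightarrow> 'a set set \<Rightarrow> bool" where
  "is_ideal r J \<longleftrightarrow> J \<subseteq> Pow (Field r) \<and> J \<noteq> {} \<and> Field r \<notin> J \<and>
     (\<forall>A. bounded_in r A \<longrightarrow> A \<in> J) \<and>
     (\<forall>A \<in> J. \<forall>B. B \<subseteq> A \<longrightarrow> B \<in> J) \<and>
     (\<forall>A \<in> J. \<forall>B \<in> J. A \<union> B \<in> J)"

definition complete_ideal :: "'a rel \<Rightarrow> 'a set set \<Rightarrow> bool" where
  "complete_ideal r J \<longleftrightarrow> (\<forall>F \<subseteq> J. (card_of F, r) \<in> ordLess \<longrightarrow> \<Union>F \<in> J)"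

definition positive :: "'a rel \<Rightarrow> 'a set set \<Rightarrow> 'a set set" where
  "positive r J = Pow (Field r) - J"

definition full_size :: "'a rel \<Rightarrow> 'a set set" where
  "full_size r = {W. W \<subseteq> Field r \<and> (card_of W, r) \<in> ordIso}"

definition clubsuit_minus_tau :: "'a rel \<Rightarrow> 't set \<Rightarrow> 'a set set \<Rightarrow> bool" where
  "clubsuit_minus_tau r T J \<longleftrightarrow> (\<exists>B :: 'a \<Rightarrow> 't \<Rightarrow> 'a set.
     (\<forall>d \<in> acc r. \<forall>i \<in> T. cofinal_below r (B d i) d) \<and>
     (\<forall>W \<in> full_size r. {d \<in> acc r. \<exists>i \<in> T. B d i \<subseteq> W} \<in> positive r J))"

definition clubsuit :: "'a rel \<Rightarrow> 'a set set \<Rightarrow> bool" where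
  "clubsuit r J \<longleftrightarrow> (\<exists>s :: 'a \<Rightarrow> 'a set.
     (\<forall>a \<in> acc r. cofinal_below r (s a) a) \<and>
     (\<forall>A \<in> full_size r. {a \<in> acc r. s a \<subseteq> A} \<in> positive r J))"

end

theory Submission
  imports Defs
begin

(*
  Enumerate the functions T -> kappa as Phi, each function occurring unboundedly often.
  Projecting the guesses B^i_delta along coordinate i of Phi gives tau candidate
  clubsuit-sequences s_i.  If clubsuit failed, each s_i would have a counterexample A_i.
  Build an unbounded M whose elements beta satisfy Phi(beta)(i) in A_i and
  sup (M \<inter> beta) <= Phi(beta)(i) <= beta (possible because kappa is regular, tau < kappa and
  kappa^tau = kappa).  Then for B^i_delta \<subseteq> M the projection of B^i_delta is cofinal in
  delta and contained in A_i, so the J-positive set of delta guessed by M is covered by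
  tau < kappa sets in J, contradicting kappa-completeness.
*)

lemma Card_order_trans: "Card_order r \<Longrightarrow> (a, b) \<in> r \<Longrightarrow> (b, c) \<in> r \<Longrightarrow> (a, c) \<in> r"
  using Card_order_wo_rel wo_rel.TRANS transD by metis

lemma Card_order_antisym: "Card_order r \<Longrightarrow> (a, b) \<in> r \<Longrightarrow> (b, a) \<in> r \<Longrightarrow> a = b"
  using Card_order_wo_rel wo_rel.ANTISYM antisymD by metis

lemma Card_order_not_le_imp_sless:
  "Card_order r \<Longrightarrow> a \<in> Field r \<Longrightarrow> b \<in> Field r \<Longrightarrow> (a, b) \<notin> r \<Longrightarrow> sless r b a"
  unfolding sless_def using Card_order_wo_rel wo_rel.in_notinI wo_rel.REFL refl_onD by metis

lemma cofinal_below_underS: "Card_order r \<Longrightarrow> cofinal_below r (underS r d) d"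
  unfolding cofinal_below_def underS_def
  using Card_order_wo_rel wo_rel.REFL refl_onD FieldI1 by fastforce

lemma uncountable_card_infinite_Field:
  assumes "Card_order r" and "uncountable_card r"
  shows "infinite (Field r)"
proof -
  have "(natLeq, card_of (Field r)) \<in> ordLeq"
    using assms(2) ordLeq_ordIso_trans[OF ordLess_imp_ordLeq ordIso_symmetric[OF card_of_Field_ordIso[OF assms(1)]]]
    unfolding uncountable_card_def by blast
  then show ?thesis using infinite_iff_natLeq_ordLeq by blast
qed

lemma small_imp_bounded_in:
  assumes "regular_card r" and "X \<subseteq> Field r" and "(card_of X, r) \<in> ordLess"
  shows "bounded_in r X"
proof -
  have C: "Card_order r" using assms(1) unfolding regular_card_def by blast
  have "\<not> (\<forall>a \<in> Field r. \<exists>b \<in> X. (a, b) \<in> r)"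
    using assms not_ordLess_ordIso unfolding regular_card_def by blast
  then obtain a where "a \<in> Field r" "\<forall>b \<in> X. (a, b) \<notin> r" by blast
  then have "X \<subseteq> underS r a"
    using assms(2) Card_order_not_le_imp_sless[OF C] unfolding underS_def sless_def by blast
  then show ?thesis using assms(2) \<open>a \<in> Field r\<close> unfolding bounded_in_def by blast
qed

lemma full_size_unbounded:
  assumes C: "Card_order r" and A: "A \<in> full_size r" and a: "a \<in> Field r"
  shows "\<exists>b \<in> A. (a, b) \<in> r"
proof (rule ccontr)
  assume "\<not> (\<exists>b \<in> A. (a, b) \<in> r)"
  then have "A \<subseteq> underS r a"
    using A a Card_order_not_le_imp_sless[OF C] unfolding full_size_def underS_def sless_def by blast
  then have "(card_of A, r) \<in> ordLess"
    using ordLeq_ordLess_trans[OF card_of_mono1 card_of_underS[OF C a]] by blast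
  then show False using A not_ordLess_ordIso unfolding full_size_def by blast
qed

lemma unbounded_fibres_enumeration:
  assumes C: "Card_order r" and inf: "infinite (Field r)" and X: "(card_of X, r) \<in> ordIso"
  shows "\<exists>\<Phi>. \<forall>x \<in> X. \<forall>c \<in> Field r. \<exists>\<beta> \<in> Field r. (c, \<beta>) \<in> r \<and> \<Phi> \<beta> = x"
proof -
  have "X \<noteq> {}"
    using card_of_ordIso_finite_Field[OF C ordIso_symmetric[OF X]] inf by auto
  then have "(card_of (X \<times> Field r), r) \<in> ordIso"
    using Card_order_Times_infinite[OF inf C, of "card_of X"] ordIso_imp_ordLeq[OF X]
    by (simp add: Field_card_of)
  then obtain g where g: "bij_betw g (X \<times> Field r) (Field r)"
    using card_of_ordIso ordIso_transitive ordIso_symmetric card_of_Field_ordIso[OF C] by metis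
  show ?thesis
  proof (intro exI ballI)
    fix x c assume x: "x \<in> X" and c: "c \<in> Field r"
    have inj: "inj_on (\<lambda>\<gamma>. g (x, \<gamma>)) (Field r)"
      using g x unfolding bij_betw_def inj_on_def by blast
    have "(card_of ((\<lambda>\<gamma>. g (x, \<gamma>)) ` Field r), r) \<in> ordIso"
      using card_of_ordIso[THEN iffD1, OF exI, OF inj_on_imp_bij_betw[OF inj]]
        card_of_Field_ordIso[OF C] ordIso_transitive ordIso_symmetric by blast
    moreover have "(\<lambda>\<gamma>. g (x, \<gamma>)) ` Field r \<subseteq> Field r"
      using g x unfolding bij_betw_def by blast
    ultimately obtain \<gamma> where \<gamma>: "\<gamma> \<in> Field r" "(c, g (x, \<gamma>)) \<in> r"
      using full_size_unbounded[OF C _ c] unfolding full_size_def by blast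
    then show "\<exists>\<beta> \<in> Field r. (c, \<beta>) \<in> r \<and> fst (inv_into (X \<times> Field r) g \<beta>) = x"
      using g x bij_betwE bij_betw_imp_inj_on inv_into_f_f by (metis SigmaI fst_conv)
  qed
qed

lemma complete_ideal_UN:
  assumes "complete_ideal r J" and "(card_of T, r) \<in> ordLess" and "\<forall>i \<in> T. X i \<in> J"
  shows "(\<Union>i \<in> T. X i) \<in> J"
  using assms ordLeq_ordLess_trans[OF card_of_image] unfolding complete_ideal_def by blast

definition squeezed :: "'a rel \<Rightarrow> 'a set \<Rightarrow> ('a \<Rightarrow> 'a) \<Rightarrow> bool" where
  "squeezed r M f \<longleftrightarrow> (\<forall>\<beta> \<in> M. (f \<beta>, \<beta>) \<in> r \<and> (\<forall>\<gamma> \<in> M. sless r \<gamma> \<beta> \<longrightarrow> (\<gamma>, f \<beta>) \<in> r))"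

lemma squeezed_Union_chain:
  assumes "Ch \<in> chains X" and "\<forall>M \<in> Ch. squeezed r M f"
  shows "squeezed r (\<Union>Ch) f"
  unfolding squeezed_def
proof (intro ballI conjI impI)
  fix \<beta> \<gamma> assume \<beta>: "\<beta> \<in> \<Union>Ch" and \<gamma>: "\<gamma> \<in> \<Union>Ch" and "sless r \<gamma> \<beta>"
  obtain M N where "M \<in> Ch" "\<beta> \<in> M" "N \<in> Ch" "\<gamma> \<in> N" using \<beta> \<gamma> by blast
  moreover have "M \<subseteq> N \<or> N \<subseteq> M" using assms(1) \<open>M \<in> Ch\<close> \<open>N \<in> Ch\<close>
    unfolding chains_def chain_subset_def by blast
  ultimately show "(\<gamma>, f \<beta>) \<in> r"
    using assms(2) \<open>sless r \<gamma> \<beta>\<close> unfolding squeezed_def by blast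
qed (use assms(2) squeezed_def in blast)

lemma squeezed_insert:
  assumes C: "Card_order r" and sq: "squeezed r M f" and below: "\<forall>x \<in> M. (x, a) \<in> r"
    and "(a, f \<beta>) \<in> r" and "(f \<beta>, \<beta>) \<in> r"
  shows "squeezed r (insert \<beta> M) f"
  unfolding squeezed_def
proof (intro ballI conjI impI)
  fix x assume "x \<in> insert \<beta> M"
  then show "(f x, x) \<in> r" using sq assms(5) unfolding squeezed_def by blast
next
  fix x \<gamma> assume x: "x \<in> insert \<beta> M" and \<gamma>: "\<gamma> \<in> insert \<beta> M" and \<gamma>x: "sless r \<gamma> x"
  show "(\<gamma>, f x) \<in> r"
  proof (cases "x = \<beta>")
    case True
    then have "\<gamma> \<in> M" using \<gamma> \<gamma>x unfolding sless_def by blast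
    then show ?thesis using True below assms(4) Card_order_trans[OF C] by blast
  next
    case False
    then have "x \<in> M" using x by blast
    moreover have "\<gamma> \<noteq> \<beta>"
    proof
      assume "\<gamma> = \<beta>"
      then have "(x, \<gamma>) \<in> r"
        using below \<open>x \<in> M\<close> assms(4,5) Card_order_trans[OF C] by blast
      then show False using \<gamma>x Card_order_antisym[OF C] unfolding sless_def by blast
    qed
    ultimately show ?thesis using \<gamma> \<gamma>x sq unfolding squeezed_def by blast
  qed
qed

lemma cofinal_image_squeezed:
  assumes C: "Card_order r" and d: "d \<in> acc r"
    and cof: "cofinal_below r B d" and BM: "B \<subseteq> M" and sq: "squeezed r M f"
  shows "cofinal_below r (f ` B) d"
  unfolding cofinal_below_def
proof (intro conjI ballI subsetI)
  fix y assume "y \<in> f ` B"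
  then obtain b where b: "b \<in> B" "y = f b" by blast
  have bd: "(b, d) \<in> r" "b \<noteq> d" using b(1) cof unfolding cofinal_below_def underS_def by auto
  have fb: "(f b, b) \<in> r" using sq b(1) BM unfolding squeezed_def by blast
  have "f b \<noteq> d" using Card_order_antisym[OF C bd(1)] fb bd(2) by blast
  then show "y \<in> underS r d" using b(2) Card_order_trans[OF C fb bd(1)] unfolding underS_def by blast
next
  fix a assume "a \<in> underS r d"
  then obtain b1 where b1: "b1 \<in> B" "(a, b1) \<in> r" using cof unfolding cofinal_below_def by blast
  then have "sless r b1 d" using cof unfolding cofinal_below_def underS_def sless_def by blast
  \<comment> \<open>as d is a limit, B has an element strictly above b1\<close>
  then obtain x where x: "sless r b1 x" "sless r x d" using d unfolding acc_def by blast
  then obtain b2 where b2: "b2 \<in> B" "(x, b2) \<in> r"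
    using cof unfolding cofinal_below_def sless_def underS_def by blast
  have "sless r b1 b2"
    using x(1) b2(2) Card_order_trans[OF C] Card_order_antisym[OF C] unfolding sless_def by metis
  then have "(b1, f b2) \<in> r" using sq b1(1) b2(1) BM unfolding squeezed_def by blast
  then show "\<exists>b \<in> f ` B. (a, b) \<in> r" using b2(1) Card_order_trans[OF C b1(2)] by blast
qed

lemma squeezed_extension:
  assumes reg: "regular_card r" and T: "(card_of T, r) \<in> ordLess"
    and A: "\<forall>i \<in> T. A i \<in> full_size r"
    and \<Phi>: "\<forall>g \<in> Func T (Field r). \<forall>c \<in> Field r. \<exists>\<beta> \<in> Field r. (c, \<beta>) \<in> r \<and> \<Phi> \<beta> = g"
    and M: "\<forall>i \<in> T. squeezed r M (\<lambda>\<beta>. \<Phi> \<beta> i)"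
    and a: "a \<in> Field r" and below: "\<forall>b \<in> M. (b, a) \<in> r"
  shows "\<exists>\<beta> \<in> Field r. (a, \<beta>) \<in> r \<and>
    (\<forall>i \<in> T. squeezed r (insert \<beta> M) (\<lambda>\<beta>. \<Phi> \<beta> i) \<and> \<Phi> \<beta> i \<in> A i)"
proof -
  have C: "Card_order r" using reg unfolding regular_card_def by blast
  have "\<forall>i \<in> T. \<exists>x \<in> A i. (a, x) \<in> r" using full_size_unbounded[OF C _ a] A by blast
  then obtain ai where ai: "\<And>i. i \<in> T \<Longrightarrow> ai i \<in> A i \<and> (a, ai i) \<in> r"
    by metis
  define g where "g i = (if i \<in> T then ai i else undefined)" for i
  have gF: "g \<in> Func T (Field r)"
    using ai A unfolding Func_def g_def full_size_def by auto
  have "bounded_in r (g ` T)"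
    using small_imp_bounded_in[OF reg _ ordLeq_ordLess_trans[OF card_of_image T]] gF
    unfolding Func_def by blast
  then obtain c where c: "c \<in> Field r" "g ` T \<subseteq> underS r c" unfolding bounded_in_def by blast
  define m where "m = wo_rel.max2 r a c"
  have m: "m \<in> Field r" "(a, m) \<in> r" "(c, m) \<in> r"
    using wo_rel.max2_greater[OF Card_order_wo_rel[OF C] a c(1)]
      wo_rel.max2_among[OF Card_order_wo_rel[OF C] a c(1)] a c(1)
    unfolding m_def by auto
  obtain \<beta> where \<beta>: "\<beta> \<in> Field r" "(m, \<beta>) \<in> r" "\<Phi> \<beta> = g" using \<Phi> gF m(1) by blast
  have "(\<Phi> \<beta> i, \<beta>) \<in> r" if "i \<in> T" for i
    using c(2) \<beta>(3) that Card_order_trans[OF C _ Card_order_trans[OF C m(3) \<beta>(2)]]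
    unfolding underS_def by blast
  then have "squeezed r (insert \<beta> M) (\<lambda>\<beta>. \<Phi> \<beta> i) \<and> \<Phi> \<beta> i \<in> A i" if "i \<in> T" for i
    using squeezed_insert[OF C _ below] M ai \<beta>(3) that unfolding g_def by auto
  moreover have "(a, \<beta>) \<in> r" using Card_order_trans[OF C m(2) \<beta>(2)] .
  ultimately show ?thesis using \<beta>(1) by blast
qed

lemma exists_full_size_squeezed:
  assumes reg: "regular_card r" and T: "(card_of T, r) \<in> ordLess"
    and A: "\<forall>i \<in> T. A i \<in> full_size r"
    and \<Phi>: "\<forall>g \<in> Func T (Field r). \<forall>c \<in> Field r. \<exists>\<beta> \<in> Field r. (c, \<beta>) \<in> r \<and> \<Phi> \<beta> = g"
  shows "\<exists>M \<in> full_size r. \<forall>i \<in> T. squeezed r M (\<lambda>\<beta>. \<Phi> \<beta> i) \<and> (\<lambda>\<beta>. \<Phi> \<beta> i) ` M \<subseteq> A i"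
proof -
  have C: "Card_order r" using reg unfolding regular_card_def by blast
  define P where "P W \<longleftrightarrow> W \<subseteq> Field r \<and>
    (\<forall>i \<in> T. squeezed r W (\<lambda>\<beta>. \<Phi> \<beta> i) \<and> (\<lambda>\<beta>. \<Phi> \<beta> i) ` W \<subseteq> A i)" for W
  have "\<forall>Ch \<in> chains {W. P W}. \<Union>Ch \<in> {W. P W}"
  proof
    fix Ch assume Ch: "Ch \<in> chains {W. P W}"
    then have "\<forall>W \<in> Ch. P W" unfolding chains_def by blast
    then show "\<Union>Ch \<in> {W. P W}"
      using squeezed_Union_chain[OF Ch] unfolding P_def by blast
  qed
  from Zorn_Lemma[OF this] obtain M where PM: "P M" and max: "\<And>W. P W \<Longrightarrow> M \<subseteq> W \<Longrightarrow> W = M"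
    by blast
  have "\<exists>b \<in> M. (a, b) \<in> r" if a: "a \<in> Field r" for a
  proof (rule ccontr)
    assume unbounded: "\<not> (\<exists>b \<in> M. (a, b) \<in> r)"
    then have "\<forall>b \<in> M. (b, a) \<in> r"
      using PM a Card_order_not_le_imp_sless[OF C] unfolding P_def sless_def by blast
    moreover have "\<forall>i \<in> T. squeezed r M (\<lambda>\<beta>. \<Phi> \<beta> i)" using PM unfolding P_def by blast
    ultimately obtain \<beta> where \<beta>: "\<beta> \<in> Field r" "(a, \<beta>) \<in> r"
      and ext: "\<forall>i \<in> T. squeezed r (insert \<beta> M) (\<lambda>\<beta>. \<Phi> \<beta> i) \<and> \<Phi> \<beta> i \<in> A i"
      using squeezed_extension[OF reg T A \<Phi> _ a] by blast
    have "P (insert \<beta> M)" using PM \<beta>(1) ext unfolding P_def by auto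
    then have "\<beta> \<in> M" using max by blast
    then show False using \<beta>(2) unbounded by blast
  qed
  then have "M \<in> full_size r" using reg PM unfolding regular_card_def full_size_def P_def by blast
  then show ?thesis using PM unfolding P_def by blast
qed

definition projected_guess ::
    "'a rel \<Rightarrow> ('a \<Rightarrow> 't \<Rightarrow> 'a set) \<Rightarrow> ('a \<Rightarrow> 't \<Rightarrow> 'a) \<Rightarrow> 't \<Rightarrow> 'a \<Rightarrow> 'a set" where
  "projected_guess r B \<Phi> i d =
     (if cofinal_below r ((\<lambda>\<beta>. \<Phi> \<beta> i) ` B d i) d then (\<lambda>\<beta>. \<Phi> \<beta> i) ` B d i else underS r d)"

lemma cofinal_projected_guess: "Card_order r \<Longrightarrow> cofinal_below r (projected_guess r B \<Phi> i d) d"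
  unfolding projected_guess_def using cofinal_below_underS by auto

lemma guessed_subset_projected_guessed:
  assumes C: "Card_order r" and cof: "\<forall>d \<in> acc r. \<forall>i \<in> T. cofinal_below r (B d i) d"
    and M: "\<forall>i \<in> T. squeezed r M (\<lambda>\<beta>. \<Phi> \<beta> i) \<and> (\<lambda>\<beta>. \<Phi> \<beta> i) ` M \<subseteq> A i"
  shows "{d \<in> acc r. \<exists>i \<in> T. B d i \<subseteq> M} \<subseteq> (\<Union>i \<in> T. {d \<in> acc r. projected_guess r B \<Phi> i d \<subseteq> A i})"
proof
  fix d assume "d \<in> {d \<in> acc r. \<exists>i \<in> T. B d i \<subseteq> M}"
  then obtain i where d: "d \<in> acc r" and i: "i \<in> T" and BM: "B d i \<subseteq> M" by blast
  have "cofinal_below r ((\<lambda>\<beta>. \<Phi> \<beta> i) ` B d i) d"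
    using cofinal_image_squeezed[OF C d _ BM] cof M d i by blast
  then have "projected_guess r B \<Phi> i d \<subseteq> A i" using BM M i unfolding projected_guess_def by auto
  then show "d \<in> (\<Union>i \<in> T. {d \<in> acc r. projected_guess r B \<Phi> i d \<subseteq> A i})" using d i by blast
qed

lemma not_clubsuit_imp_counterexample:
  assumes "\<not> clubsuit r J" and "\<forall>a \<in> acc r. cofinal_below r (s a) a"
  shows "\<exists>A \<in> full_size r. {a \<in> acc r. s a \<subseteq> A} \<in> J"
proof -
  obtain A where "A \<in> full_size r" "{a \<in> acc r. s a \<subseteq> A} \<notin> positive r J"
    using assms unfolding clubsuit_def by blast
  moreover have "{a \<in> acc r. s a \<subseteq> A} \<subseteq> Field r" unfolding acc_def by blast
  ultimately show ?thesis unfolding positive_def by blast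
qed

theorem proposition3p16:
  fixes r :: "'a rel" and T :: "'t set" and J :: "'a set set"
  assumes "regular_card r" and "uncountable_card r"
    and "(card_of {True}, card_of T) \<in> ordLess"
    and "(card_of T, r) \<in> ordLess"
    and "(BNF_Cardinal_Arithmetic.cexp r (card_of T), r) \<in> ordIso"
    and "is_ideal r J" and "complete_ideal r J"
    and "NS r \<subseteq> J"
    and "clubsuit_minus_tau r T J"
  shows "clubsuit r J"
proof (rule ccontr)
  assume no_clubsuit: "\<not> clubsuit r J"
  have C: "Card_order r" using assms(1) unfolding regular_card_def by blast
  obtain \<Phi> where \<Phi>: "\<forall>g \<in> Func T (Field r). \<forall>c \<in> Field r. \<exists>\<beta> \<in> Field r. (c, \<beta>) \<in> r \<and> \<Phi> \<beta> = g"
    using unbounded_fibres_enumeration[OF C uncountable_card_infinite_Field[OF C assms(2)]] assms(5)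
    unfolding cexp_def Field_card_of by blast
  obtain B where B_cof: "\<forall>d \<in> acc r. \<forall>i \<in> T. cofinal_below r (B d i) d"
    and B_guess: "\<forall>W \<in> full_size r. {d \<in> acc r. \<exists>i \<in> T. B d i \<subseteq> W} \<in> positive r J"
    using assms(9) unfolding clubsuit_minus_tau_def by blast
  have "\<exists>A \<in> full_size r. {d \<in> acc r. projected_guess r B \<Phi> i d \<subseteq> A} \<in> J" for i
    by (rule not_clubsuit_imp_counterexample[OF no_clubsuit]) (simp add: cofinal_projected_guess[OF C])
  then obtain A where A: "\<And>i. A i \<in> full_size r \<and> {d \<in> acc r. projected_guess r B \<Phi> i d \<subseteq> A i} \<in> J"
    by metis
  obtain M where M: "M \<in> full_size r"
    and M_sq: "\<forall>i \<in> T. squeezed r M (\<lambda>\<beta>. \<Phi> \<beta> i) \<and> (\<lambda>\<beta>. \<Phi> \<beta> i) ` M \<subseteq> A i"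
    using exists_full_size_squeezed[OF assms(1,4) _ \<Phi>] A by blast
  have "{d \<in> acc r. \<exists>i \<in> T. B d i \<subseteq> M} \<subseteq> (\<Union>i \<in> T. {d \<in> acc r. projected_guess r B \<Phi> i d \<subseteq> A i})"
    using guessed_subset_projected_guessed[OF C B_cof M_sq] .
  moreover have "(\<Union>i \<in> T. {d \<in> acc r. projected_guess r B \<Phi> i d \<subseteq> A i}) \<in> J"
    using A by (intro complete_ideal_UN[OF assms(7,4)]) blast
  ultimately have "{d \<in> acc r. \<exists>i \<in> T. B d i \<subseteq> M} \<in> J"
    using assms(6) unfolding is_ideal_def by blast
  then show False using B_guess M unfolding positive_def by blast
qed

end
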